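(* Let $t$ be an odd positive integer. Then for every integer $n\ge0$, $$b^{3}_{2,3t}(3n+2)\equiv 0\pmod 6.$$
   Context: For integers $r\ge1$ write $f_r=\prod_{i\ge1}(1-q^{ri})$. For coprime positive integers $\ell,m$ and a positive integer $k$, $b^{k}_{\ell,m}(n)$ denotes the number of $k$-colored partitions of $n$ into parts not divisible by $\ell$ or by $m$, i.e. $\sum_{n\ge0} b^{k}_{\ell,m}(n)q^n=\dfrac{f_\ell^k f_m^k}{f_1^k f_{\ell m}^k}$. Thus $\sum b^3_{2,3t}(n)q^n=\dfrac{f_2^3f_{3t}^3}{f_1^3f_{6t}^3}$. *)

theory Defs
  imports "HOL-Computational_Algebra.Formal_Power_Series"
begin

text \<open>Truncation of f_r = prod_{i>=1} (1 - q^(r i)) to the factors with i <= N.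
  For r >= 1 and N >= n, this agrees with f_r modulo q^(n+1).\<close>
definition eta_trunc :: "nat \<Rightarrow> nat \<Rightarrow> rat fps" where
  "eta_trunc r N = (\<Prod>i\<in>{1..N}. 1 - fps_X ^ (r * i))"

text \<open>b^k_{l,m}(n) = coefficient of q^n in f_l^k f_m^k / (f_1^k f_{lm}^k);
  truncating each product at N = n does not change the n-th coefficient.\<close>
definition b_col :: "nat \<Rightarrow> nat \<Rightarrow> nat \<Rightarrow> nat \<Rightarrow> rat" where
  "b_col k l m n =
     fps_nth ((eta_trunc l n ^ k * eta_trunc m n ^ k) /
              (eta_trunc 1 n ^ k * eta_trunc (l * m) n ^ k)) n"

end

theory Submission
  imports Defs "HOL-Computational_Algebra.Polynomial"
begin

text \<open>
  Modulo 3, the congruence (1 - q^k)^3 \<equiv> 1 - q^(3k) turns f_2^3 f_3t^3 / (f_1^3 f_6t^3) into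
  f_6 f_9t / (f_3 f_18t), a power series in q^3, so its coefficient of q^(3n+2) is divisible by 3.
  Modulo 2, f_2 \<equiv> f_1^2 and f_6t \<equiv> f_3t^2 turn it into f_1^3 / f_3t^3. Here 1 / f_3t^3 is again
  a series in q^3, while by Jacobi's identity f_1^3 = sum_k (-1)^k (2k+1) q^(k(k+1)/2) has no
  terms q^m with m \<equiv> 2 (mod 3), as triangular numbers are never 2 (mod 3); so the coefficient is
  also even.

  Jacobi's identity is only needed for the finite products (q;q)_N. It follows from the
  q-binomial theorem by differentiating prod_{i=0..2N} (q^N + z q^i) with respect to z at z = -1:
  the product rule leaves only the factor i = N, giving +-q^c (q;q)_N^2, while the q-binomial
  expansion is a sum of terms q^c q^T G with T triangular and G (q;q)_N \<equiv> 1 modulo a power of q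
  high enough that q^T G (q;q)_N has no term q^m with m \<le> N, m \<equiv> 2 (mod 3).
\<close>

unbundle fps_syntax

lemma fps_prod_nth_0: "(\<Prod>i\<in>S. f i :: 'a::comm_ring_1 fps) $ 0 = (\<Prod>i\<in>S. f i $ 0)"
  by (induction S rule: infinite_finite_induct) simp_all

lemma fps_inverse_nth_rec:
  fixes B :: "'a::field fps"
  assumes "0 < n"
  shows "inverse B $ n = - inverse (B $ 0) * (\<Sum>i=1..n. B $ i * inverse B $ (n - i))"
  using assms by (simp add: fps_inverse_def fps_right_inverse_constructor_rec)

lemma fps_neg_one_power_mult_nth: "((-1) ^ k * F :: 'a::comm_ring_1 fps) $ n = (-1) ^ k * F $ n"
  by (induction k) simp_all

lemma fps_of_nat_mult_nth: "(of_nat k * F :: 'a::comm_ring_1 fps) $ n = of_nat k * F $ n"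
  by (simp flip: fps_of_nat)

lemma fps_X_power_mult_nth_gap:
  fixes H :: "'a::comm_ring_1 fps"
  assumes "fps_X ^ Suc d dvd H - 1" "m \<noteq> e" "m \<le> e + d"
  shows "(fps_X ^ e * H) $ m = 0"
proof (cases "m < e")
  case False
  then have "m - e < Suc d" using assms(2,3) by auto
  obtain U where U: "H - 1 = fps_X ^ Suc d * U" using assms(1) by (elim dvdE)
  have "(H - 1) $ (m - e) = 0" unfolding U fps_X_power_mult_nth using \<open>m - e < Suc d\<close> by simp
  then show ?thesis using False assms(2) by (simp add: fps_X_power_mult_nth)
qed (simp add: fps_X_power_mult_nth)

lemma dvd_prod_sub_1:
  fixes D :: "'a::comm_ring_1"
  assumes "\<And>i. i \<in> S \<Longrightarrow> D dvd f i - 1"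
  shows "D dvd (\<Prod>i\<in>S. f i) - 1"
  using assms
proof (induction S rule: infinite_finite_induct)
  case (insert x F)
  have "prod f (insert x F) - 1 = (f x - 1) * prod f F + (prod f F - 1)"
    using insert(1,2) by (simp add: algebra_simps)
  moreover have "D dvd (f x - 1) * prod f F + (prod f F - 1)"
    using insert by (intro dvd_add dvd_mult2) auto
  ultimately show ?case by (simp only:)
qed simp_all

lemma poly_altdef_le:
  fixes p :: "'a::comm_semiring_1 poly"
  assumes "degree p \<le> n"
  shows "poly p x = (\<Sum>i\<le>n. coeff p i * x ^ i)"
proof -
  have "poly p x = (\<Sum>i\<le>degree p. coeff p i * x ^ i)"
    by (rule poly_altdef)
  also have "\<dots> = (\<Sum>i\<le>n. coeff p i * x ^ i)"
    using assms by (intro sum.mono_neutral_left) (auto simp: coeff_eq_0)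
  finally show ?thesis .
qed

lemma choose_two_Suc: "Suc k choose 2 = (k choose 2) + k"
  by (simp add: numeral_2_eq_2)

lemma choose_two_add: "(a + b) choose 2 = (a choose 2) + (b choose 2) + a * b"
  by (induction b) (simp_all add: choose_two_Suc)

lemma choose_two_double: "2 * (k choose 2) + k = k * k"
  by (induction k) (simp_all add: choose_two_Suc)

lemma choose_two_mod_3: "(k choose 2) mod 3 \<noteq> 2"
proof (induction k rule: less_induct)
  case (less k)
  show ?case
  proof (cases "k < 3")
    case True
    then have "k = 0 \<or> k = 1 \<or> k = 2" by auto
    then show ?thesis by (auto simp: choose_two_Suc numeral_2_eq_2)
  next
    case False
    then obtain r where r: "k = r + 3" by (metis add.commute le_Suc_ex not_less)
    have "(k choose 2) = (r choose 2) + 3 * (r + 1)"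
      unfolding r choose_two_add by (simp add: numeral_3_eq_3 choose_two_Suc)
    then have "(k choose 2) mod 3 = (r choose 2) mod 3"
      by (simp only: mod_mult_self2)
    then show ?thesis using less.IH[of r] r by simp
  qed
qed

section \<open>q-Pochhammer symbols and Gaussian binomial coefficients\<close>

definition qpoch :: "nat \<Rightarrow> 'a::comm_ring_1 fps" where
  "qpoch N = (\<Prod>i\<in>{1..N}. 1 - fps_X ^ i)"

lemma qpoch_0 [simp]: "qpoch 0 = 1"
  by (simp add: qpoch_def)

lemma qpoch_Suc: "qpoch (Suc N) = qpoch N * (1 - fps_X ^ Suc N)"
  by (simp add: qpoch_def prod.cl_ivl_Suc)

lemma qpoch_nth_0 [simp]: "qpoch N $ 0 = 1"
  unfolding qpoch_def fps_prod_nth_0 by (intro prod.neutral) simp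

lemma qpoch_nonzero: "qpoch N \<noteq> 0"
  using qpoch_nth_0[of N] by (metis fps_zero_nth zero_neq_one)

lemma qpoch_split:
  assumes "a \<le> b"
  obtains R where "qpoch b = qpoch a * R" "fps_X ^ Suc a dvd R - 1"
proof
  define R :: "'a fps" where "R = (\<Prod>i\<in>{Suc a..b}. 1 - fps_X ^ i)"
  have "{1..b} = {1..a} \<union> {Suc a..b}" using assms by auto
  then show "qpoch b = qpoch a * R"
    unfolding qpoch_def R_def by (simp add: prod.union_disjoint)
  have "fps_X ^ Suc a dvd (1 - fps_X ^ i) - (1 :: 'a fps)" if "i \<in> {Suc a..b}" for i
  proof -
    have "(fps_X ^ Suc a :: 'a fps) dvd fps_X ^ i" using that by (intro le_imp_power_dvd) simp
    moreover have "(1 - fps_X ^ i) - 1 = - (fps_X ^ i :: 'a fps)" by (simp add: algebra_simps)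
    ultimately show ?thesis by (simp only: dvd_minus_iff)
  qed
  then show "fps_X ^ Suc a dvd R - 1"
    unfolding R_def by (rule dvd_prod_sub_1)
qed

fun gauss_binom :: "nat \<Rightarrow> nat \<Rightarrow> 'a::comm_ring_1 fps" where
  "gauss_binom M 0 = 1"
| "gauss_binom 0 (Suc j) = 0"
| "gauss_binom (Suc M) (Suc j) = gauss_binom M (Suc j) + fps_X ^ (M - j) * gauss_binom M j"

lemma gauss_binom_eq_0: "M < j \<Longrightarrow> gauss_binom M j = 0"
proof (induction M arbitrary: j)
  case 0
  then show ?case by (cases j) auto
next
  case (Suc M)
  then show ?case by (cases j) auto
qed

lemma gauss_binom_qpoch:
  "j \<le> M \<Longrightarrow> gauss_binom M j * qpoch j * qpoch (M - j) = qpoch M"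
proof (induction M arbitrary: j)
  case 0
  then show ?case by simp
next
  case (Suc M j)
  show ?case
  proof (cases j)
    case (Suc k)
    show ?thesis
    proof (cases "k = M")
      case True
      then show ?thesis
        using Suc.IH[of M] \<open>j = Suc k\<close> by (simp add: gauss_binom_eq_0 qpoch_Suc flip: mult.assoc)
    next
      case False
      then have k: "k < M" using Suc.prems \<open>j = Suc k\<close> by simp
      then have Mk: "M - k = Suc (M - Suc k)" by simp
      have IH0: "gauss_binom M k * qpoch k * qpoch (M - k) = (qpoch M :: 'a fps)"
        using Suc.IH[of k] k by simp
      have IH1: "gauss_binom M (Suc k) * qpoch (Suc k) * qpoch (M - Suc k) = (qpoch M :: 'a fps)"
        using Suc.IH[of "Suc k"] k by simp
      have "(gauss_binom (Suc M) j :: 'a fps) * qpoch j * qpoch (Suc M - j)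
          = gauss_binom M (Suc k) * qpoch (Suc k) * qpoch (M - Suc k) * (1 - fps_X ^ (M - k))
            + fps_X ^ (M - k) * (gauss_binom M k * qpoch k * qpoch (M - k)) * (1 - fps_X ^ Suc k)"
        unfolding \<open>j = Suc k\<close> by (simp add: Mk qpoch_Suc algebra_simps)
      also have "\<dots> = qpoch M * (1 - fps_X ^ (M - k)) + fps_X ^ (M - k) * qpoch M * (1 - fps_X ^ Suc k)"
        by (simp only: IH0 IH1)
      also have "\<dots> = qpoch M * (1 - fps_X ^ (M - k) * fps_X ^ Suc k)"
        by (simp add: algebra_simps)
      also have "\<dots> = qpoch (Suc M)"
        using k by (simp only: qpoch_Suc flip: power_add) simp
      finally show ?thesis .
    qed
  qed simp
qed

lemma fps_X_power_dvd_qpoch_ratio_sub_1: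
  fixes G :: "'a::idom fps"
  assumes "G * qpoch a * qpoch b = qpoch (a + b)" "a \<le> N" "N \<le> b"
  shows "fps_X ^ Suc a dvd G * qpoch N - 1"
proof -
  obtain R :: "'a fps" where R: "qpoch (a + b) = qpoch b * R" "fps_X ^ Suc b dvd R - 1"
    using qpoch_split[of b "a + b"] by auto
  obtain S :: "'a fps" where S: "qpoch N = qpoch a * S" "fps_X ^ Suc a dvd S - 1"
    using qpoch_split[OF assms(2)] by auto
  have "qpoch b * (G * qpoch N) = qpoch b * (R * S)"
    using assms(1) R(1) S(1) by (simp add: ac_simps)
  then have GN: "G * qpoch N = R * S"
    by (simp add: qpoch_nonzero)
  have "fps_X ^ Suc a dvd (R - 1) * S + (S - 1)"
    using R(2) S(2) assms(2,3)
    by (intro dvd_add dvd_mult2) (meson Suc_le_mono dvd_trans le_imp_power_dvd le_trans)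
  then show ?thesis
    unfolding GN by (simp add: algebra_simps)
qed

lemma fps_X_power_dvd_gauss_binom_qpoch_sub_1:
  assumes "j \<le> M" "min j (M - j) \<le> N" "N \<le> max j (M - j)"
  shows "fps_X ^ Suc (min j (M - j)) dvd gauss_binom M j * qpoch N - (1 :: 'a::idom fps)"
proof -
  have G: "gauss_binom M j * qpoch j * qpoch (M - j) = (qpoch M :: 'a fps)"
    using assms(1) by (rule gauss_binom_qpoch)
  show ?thesis
  proof (cases "j \<le> M - j")
    case True
    have "fps_X ^ Suc j dvd gauss_binom M j * qpoch N - (1 :: 'a fps)"
      using G assms True by (intro fps_X_power_dvd_qpoch_ratio_sub_1[of _ j "M - j"]) simp_all
    then show ?thesis using True by (simp add: min_absorb1)
  next
    case False
    have "gauss_binom M j * qpoch (M - j) * qpoch j = (qpoch (M - j + j) :: 'a fps)"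
      using G assms(1) by (simp add: ac_simps)
    then have "fps_X ^ Suc (M - j) dvd gauss_binom M j * qpoch N - (1 :: 'a fps)"
      using False assms by (intro fps_X_power_dvd_qpoch_ratio_sub_1[of _ "M - j" j]) simp_all
    then show ?thesis using False by (simp add: min_absorb2)
  qed
qed

lemma gauss_binom_Suc_Suc_mult:
  fixes a :: "'a::comm_ring_1 fps"
  shows "a * (gauss_binom M (Suc k) * fps_X ^ (Suc k choose 2) * a ^ (M - Suc k))
      + fps_X ^ M * (gauss_binom M k * fps_X ^ (k choose 2) * a ^ (M - k))
    = gauss_binom (Suc M) (Suc k) * fps_X ^ (Suc k choose 2) * a ^ (M - k)"
proof -
  have first: "a * (gauss_binom M (Suc k) * fps_X ^ (Suc k choose 2) * a ^ (M - Suc k))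
      = gauss_binom M (Suc k) * fps_X ^ (Suc k choose 2) * a ^ (M - k)"
  proof (cases "k < M")
    case True
    have "a * (gauss_binom M (Suc k) * fps_X ^ (Suc k choose 2) * a ^ (M - Suc k))
        = gauss_binom M (Suc k) * fps_X ^ (Suc k choose 2) * (a * a ^ (M - Suc k))"
      by (simp only: ac_simps)
    then show ?thesis
      by (simp only: power_Suc[symmetric] Suc_diff_Suc[OF True])
  qed (simp add: gauss_binom_eq_0)
  have second: "fps_X ^ M * (gauss_binom M k * fps_X ^ (k choose 2) * a ^ (M - k))
      = fps_X ^ (M - k) * gauss_binom M k * fps_X ^ (Suc k choose 2) * a ^ (M - k)"
  proof (cases "k \<le> M")
    case True
    then have X: "fps_X ^ M * fps_X ^ (k choose 2) = fps_X ^ (M - k) * (fps_X ^ (Suc k choose 2) :: 'a fps)"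
      by (simp add: choose_two_Suc flip: power_add)
    have "fps_X ^ M * (gauss_binom M k * fps_X ^ (k choose 2) * a ^ (M - k))
        = gauss_binom M k * (fps_X ^ M * fps_X ^ (k choose 2)) * a ^ (M - k)"
      by (simp only: ac_simps)
    also have "\<dots> = fps_X ^ (M - k) * gauss_binom M k * fps_X ^ (Suc k choose 2) * a ^ (M - k)"
      unfolding X by (simp only: ac_simps)
    finally show ?thesis .
  qed (simp add: gauss_binom_eq_0)
  show ?thesis
    unfolding first second by (simp add: algebra_simps)
qed

lemma coeff_q_binomial:
  fixes a :: "'a::comm_ring_1 fps"
  shows "coeff (\<Prod>i<M. [:a, fps_X ^ i:]) j = gauss_binom M j * fps_X ^ (j choose 2) * a ^ (M - j)"
proof (induction M arbitrary: j)
  case 0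
  then show ?case by (cases j) (simp_all add: coeff_1 numeral_2_eq_2)
next
  case (Suc M j)
  have step: "(\<Prod>i<Suc M. [:a, fps_X ^ i:]) = (\<Prod>i<M. [:a, fps_X ^ i:]) * [:a, fps_X ^ M:]"
    by simp
  show ?case
  proof (cases j)
    case 0
    then show ?thesis using Suc.IH[of 0] unfolding step by simp
  next
    case (Suc k)
    have "coeff (\<Prod>i<Suc M. [:a, fps_X ^ i:]) j
        = a * coeff (\<Prod>i<M. [:a, fps_X ^ i:]) (Suc k) + fps_X ^ M * coeff (\<Prod>i<M. [:a, fps_X ^ i:]) k"
      unfolding step \<open>j = Suc k\<close> by (simp add: coeff_pCons ac_simps)
    then show ?thesis
      unfolding Suc.IH gauss_binom_Suc_Suc_mult \<open>j = Suc k\<close> by simp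
  qed
qed

section \<open>Jacobi's identity for the cube of \<open>(q;q)\<^sub>N\<close>\<close>

lemma prod_lessThan_X_power_diff:
  "(\<Prod>i<N. fps_X ^ N - fps_X ^ i) = (-1) ^ N * fps_X ^ (N choose 2) * (qpoch N :: 'a::comm_ring_1 fps)"
proof (induction N)
  case (Suc N)
  have "(\<Prod>i<Suc N. fps_X ^ Suc N - fps_X ^ i)
      = (fps_X ^ Suc N - 1) * (\<Prod>i<N. fps_X * (fps_X ^ N - fps_X ^ i) :: 'a fps)"
    by (subst prod.lessThan_Suc_shift) (simp add: right_diff_distrib)
  also have "\<dots> = (fps_X ^ Suc N - 1) * (fps_X ^ N * (\<Prod>i<N. fps_X ^ N - fps_X ^ i))"
    by (simp add: prod.distrib)
  also have "\<dots> = (-1) ^ Suc N * fps_X ^ (Suc N choose 2) * (qpoch (Suc N) :: 'a fps)"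
    unfolding Suc.IH by (simp add: qpoch_Suc choose_two_Suc power_add algebra_simps)
  finally show ?case .
qed (simp add: numeral_2_eq_2)

lemma prod_upper_X_power_diff:
  "(\<Prod>i\<in>{Suc N..2*N}. fps_X ^ N - fps_X ^ i) = fps_X ^ (N * N) * (qpoch N :: 'a::comm_ring_1 fps)"
proof -
  have "(\<Prod>i\<in>{Suc N..2*N}. fps_X ^ N - fps_X ^ i) = (\<Prod>i\<in>{1+N..N+N}. fps_X ^ N - (fps_X ^ i :: 'a fps))"
    by (simp add: mult_2)
  also have "\<dots> = (\<Prod>i\<in>{1..N}. fps_X ^ N - fps_X ^ (i + N))"
    by (rule prod.shift_bounds_cl_nat_ivl)
  also have "\<dots> = (\<Prod>i\<in>{1..N}. fps_X ^ N * (1 - fps_X ^ i))"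
    by (simp add: power_add algebra_simps)
  also have "\<dots> = fps_X ^ (N * N) * qpoch N"
    by (simp add: prod.distrib qpoch_def power_mult)
  finally show ?thesis .
qed

definition jacobi_poly :: "nat \<Rightarrow> 'a::comm_ring_1 fps poly" where
  "jacobi_poly N = (\<Prod>i<2*N+1. [:fps_X ^ N, fps_X ^ i:])"

lemma poly_pderiv_jacobi_poly_prod:
  "poly (pderiv (jacobi_poly N)) (-1) = (-1) ^ N * fps_X ^ (N + (N choose 2) + N * N) * (qpoch N ^ 2 :: 'a::idom fps)"
proof -
  define A where "A = {..<2*N+1}"
  define f :: "nat \<Rightarrow> 'a fps poly" where "f i = [:fps_X ^ N, fps_X ^ i:]" for i
  have N: "N \<in> A" "finite A" unfolding A_def by auto
  have vanish: "poly (prod f (A - {a}) * pderiv (f a)) (-1) = 0" if "a \<in> A - {N}" for a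
  proof -
    have "poly (prod f (A - {a})) (-1) = (\<Prod>i\<in>A - {a}. poly (f i) (-1))"
      by (rule poly_prod)
    also have "\<dots> = 0"
      using that N by (intro prod_zero) (auto simp: f_def intro!: bexI[of _ N])
    finally show ?thesis by simp
  qed
  have "poly (pderiv (jacobi_poly N)) (-1) = (\<Sum>a\<in>A. poly (prod f (A - {a}) * pderiv (f a)) (-1))"
    unfolding jacobi_poly_def A_def f_def pderiv_prod by (simp add: poly_sum)
  also have "\<dots> = poly (prod f (A - {N}) * pderiv (f N)) (-1)"
  proof -
    have "(\<Sum>a\<in>A - {N}. poly (prod f (A - {a}) * pderiv (f a)) (-1)) = 0"
      using vanish by (intro sum.neutral) blast
    then show ?thesis unfolding sum.remove[OF N(2,1)] by simp
  qed
  also have "\<dots> = fps_X ^ N * (\<Prod>i\<in>A - {N}. fps_X ^ N - fps_X ^ i)"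
    by (simp add: poly_prod f_def pderiv_pCons)
  also have "A - {N} = {..<N} \<union> {Suc N..2*N}"
    unfolding A_def by auto
  also have "(\<Prod>i\<in>{..<N} \<union> {Suc N..2*N}. fps_X ^ N - fps_X ^ i)
      = (\<Prod>i<N. fps_X ^ N - fps_X ^ i) * (\<Prod>i\<in>{Suc N..2*N}. fps_X ^ N - (fps_X ^ i :: 'a fps))"
    by (rule prod.union_disjoint) auto
  finally show ?thesis
    unfolding prod_lessThan_X_power_diff prod_upper_X_power_diff by (simp add: power_add power2_eq_square algebra_simps)
qed

lemma poly_pderiv_jacobi_poly_sum:
  "poly (pderiv (jacobi_poly N)) (-1) = (\<Sum>s=1..2*N+1. (-1) ^ (s - 1) * of_nat s *
     (gauss_binom (2*N+1) s * fps_X ^ ((s choose 2) + N * (2*N+1 - s)) :: 'a::idom fps))"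
proof -
  have coeff: "coeff (jacobi_poly N) s = gauss_binom (2*N+1) s * (fps_X ^ ((s choose 2) + N * (2*N+1 - s)) :: 'a fps)" for s
    unfolding jacobi_poly_def coeff_q_binomial by (simp add: power_add power_mult mult.assoc)
  have "degree (pderiv (jacobi_poly N) :: 'a fps poly) \<le> 2*N"
    by (rule degree_le) (auto simp: coeff_pderiv coeff gauss_binom_eq_0)
  then have "poly (pderiv (jacobi_poly N)) (-1) = (\<Sum>i\<in>{0..2*N}. of_nat (Suc i) * coeff (jacobi_poly N) (Suc i) * (-1 :: 'a fps) ^ i)"
    by (simp add: poly_altdef_le coeff_pderiv atMost_atLeast0)
  also have "\<dots> = (\<Sum>s=1..2*N+1. of_nat s * coeff (jacobi_poly N) s * (-1) ^ (s - 1))"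
    using sum.shift_bounds_cl_Suc_ivl[of "\<lambda>s. of_nat s * coeff (jacobi_poly N) s * (-1 :: 'a fps) ^ (s - 1)" 0 "2*N"]
    by simp
  finally show ?thesis
    unfolding coeff by (simp add: ac_simps)
qed

lemma jacobi_exponent_low:
  assumes "N = s + r"
  shows "(s choose 2) + N * (2*N+1 - s) = N + (N choose 2) + N * N + (Suc r choose 2)"
proof -
  have "2*N+1 - s = N + Suc r" using assms by simp
  then show ?thesis
    using choose_two_double[of r] unfolding assms choose_two_add choose_two_Suc
    by (simp add: algebra_simps)
qed

lemma jacobi_exponent_high:
  assumes "s = N + Suc k" "N = k + u"
  shows "(s choose 2) + N * (2*N+1 - s) = N + (N choose 2) + N * N + (Suc k choose 2)"
proof -
  have "2*N+1 - s = u" using assms by simp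
  then show ?thesis
    unfolding assms(1) choose_two_add using assms(2) by (simp add: algebra_simps)
qed

lemma jacobi_exponent:
  assumes "s \<in> {1..2*N+1}"
  obtains k where "(s choose 2) + N * (2*N+1 - s) = N + (N choose 2) + N * N + (k choose 2)"
    and "N \<le> (k choose 2) + min s (2*N+1 - s)"
proof (cases "s \<le> N")
  case True
  then obtain r where r: "N = s + r" using le_Suc_ex by blast
  show ?thesis
  proof (rule that[OF jacobi_exponent_low[OF r]])
    show "N \<le> (Suc r choose 2) + min s (2*N+1 - s)"
      unfolding r by (simp add: choose_two_Suc)
  qed
next
  case False
  then obtain k where k: "s = N + Suc k" using less_imp_Suc_add[of N s] by auto
  then have "k \<le> N" using assms by simp
  then obtain u where u: "N = k + u" using le_Suc_ex by blast
  show ?thesis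
  proof (rule that[OF jacobi_exponent_high[OF k u]])
    show "N \<le> (Suc k choose 2) + min s (2*N+1 - s)"
      using k u by (simp add: choose_two_Suc)
  qed
qed

lemma jacobi_term_nth_eq_0:
  assumes "s \<in> {1..2*N+1}" "m \<le> N" "m mod 3 = 2"
  shows "(fps_X ^ ((s choose 2) + N * (2*N+1 - s)) * (gauss_binom (2*N+1) s * qpoch N :: 'a::idom fps))
           $ (N + (N choose 2) + N * N + m) = 0"
proof -
  obtain k where e: "(s choose 2) + N * (2*N+1 - s) = N + (N choose 2) + N * N + (k choose 2)"
    and d: "N \<le> (k choose 2) + min s (2*N+1 - s)"
    using jacobi_exponent[OF assms(1)] by blast
  have "fps_X ^ Suc (min s (2*N+1 - s)) dvd gauss_binom (2*N+1) s * qpoch N - (1 :: 'a fps)"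
    using assms(1) by (intro fps_X_power_dvd_gauss_binom_qpoch_sub_1) auto
  moreover have "m \<noteq> k choose 2" using choose_two_mod_3[of k] assms(3) by auto
  ultimately have "(fps_X ^ (k choose 2) * (gauss_binom (2*N+1) s * qpoch N :: 'a fps)) $ m = 0"
    using d assms(2) by (intro fps_X_power_mult_nth_gap) auto
  then show ?thesis
    unfolding e power_add mult.assoc by (simp add: fps_X_power_mult_nth)
qed

theorem qpoch_cube_nth_eq_0:
  assumes "m \<le> N" "m mod 3 = 2"
  shows "(qpoch N ^ 3 :: 'a::idom fps) $ m = 0"
proof -
  define c where "c = N + (N choose 2) + N * N"
  define T :: "nat \<Rightarrow> 'a fps"
    where "T s = fps_X ^ ((s choose 2) + N * (2*N+1 - s)) * (gauss_binom (2*N+1) s * qpoch N)" for s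
  have "(-1) ^ N * (fps_X ^ c * qpoch N ^ 3) = poly (pderiv (jacobi_poly N)) (-1) * (qpoch N :: 'a fps)"
    unfolding poly_pderiv_jacobi_poly_prod c_def by (simp add: power3_eq_cube power2_eq_square ac_simps)
  also have "\<dots> = (\<Sum>s=1..2*N+1. (-1) ^ (s - 1) * of_nat s * T s)"
    unfolding poly_pderiv_jacobi_poly_sum sum_distrib_right T_def by (simp add: ac_simps)
  finally have sum: "(-1) ^ N * (fps_X ^ c * qpoch N ^ 3) = (\<Sum>s=1..2*N+1. (-1) ^ (s - 1) * of_nat s * T s)" .
  have "(\<Sum>s=1..2*N+1. (-1) ^ (s - 1) * of_nat s * T s) $ (c + m) = 0"
    unfolding fps_sum_nth
  proof (rule sum.neutral, rule ballI)
    fix s assume "s \<in> {1..2*N+1}"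
    from jacobi_term_nth_eq_0[OF this assms, where 'a='a] show "((-1) ^ (s - 1) * of_nat s * T s) $ (c + m) = 0"
      unfolding mult.assoc fps_neg_one_power_mult_nth fps_of_nat_mult_nth T_def c_def by simp
  qed
  then show ?thesis
    unfolding sum[symmetric] fps_neg_one_power_mult_nth by (simp add: fps_X_power_mult_nth)
qed

definition fps_in_X_power :: "nat \<Rightarrow> 'a::zero fps \<Rightarrow> bool" where
  "fps_in_X_power d A \<longleftrightarrow> (\<forall>k. \<not> d dvd k \<longrightarrow> A $ k = 0)"

lemma fps_in_X_power_1: "fps_in_X_power d (1 :: 'a::{zero,one} fps)"
  by (simp add: fps_in_X_power_def)

lemma fps_in_X_power_mult_nth_eq_0:
  fixes F W :: "'a::comm_ring_1 fps"
  assumes "fps_in_X_power d W" "\<And>i. i \<le> n \<Longrightarrow> i mod d = n mod d \<Longrightarrow> F $ i = 0"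
  shows "(F * W) $ n = 0"
  unfolding fps_mult_nth
proof (rule sum.neutral, rule ballI)
  fix i assume i: "i \<in> {0..n}"
  show "F $ i * W $ (n - i) = 0"
  proof (cases "d dvd n - i")
    case True
    then obtain q where "n - i = d * q" by (elim dvdE)
    then have "n = i + d * q" using i by simp
    then have "i mod d = n mod d" by simp
    then show ?thesis using assms(2) i by simp
  next
    case False
    then show ?thesis using assms(1) by (simp add: fps_in_X_power_def)
  qed
qed

lemma fps_in_X_power_mult:
  fixes A B :: "'a::comm_ring_1 fps"
  assumes "fps_in_X_power d A" "fps_in_X_power d B"
  shows "fps_in_X_power d (A * B)"
  unfolding fps_in_X_power_def
proof (intro allI impI)
  fix k assume "\<not> d dvd k"
  then show "(A * B) $ k = 0"
    using assms(1) by (intro fps_in_X_power_mult_nth_eq_0[OF assms(2)])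
      (auto simp: fps_in_X_power_def mod_eq_0_iff_dvd[symmetric])
qed

lemma fps_in_X_power_prod:
  "(\<And>i. i \<in> S \<Longrightarrow> fps_in_X_power d (f i)) \<Longrightarrow> fps_in_X_power d (\<Prod>i\<in>S. f i :: 'a::comm_ring_1 fps)"
  by (induction S rule: infinite_finite_induct) (simp_all add: fps_in_X_power_1 fps_in_X_power_mult)

lemma fps_in_X_power_power:
  "fps_in_X_power d A \<Longrightarrow> fps_in_X_power d (A ^ k :: 'a::comm_ring_1 fps)"
  by (induction k) (simp_all add: fps_in_X_power_1 fps_in_X_power_mult)

lemma fps_in_X_power_inverse:
  fixes B :: "'a::field fps"
  assumes "fps_in_X_power d B"
  shows "fps_in_X_power d (inverse B)"
  unfolding fps_in_X_power_def
proof (intro allI impI)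
  fix n assume "\<not> d dvd n"
  then show "inverse B $ n = 0"
  proof (induction n rule: less_induct)
    case (less n)
    then have "0 < n" by (intro gr0I) simp
    have "B $ i * inverse B $ (n - i) = 0" if i: "i \<in> {1..n}" for i
    proof (cases "d dvd i")
      case True
      then have "\<not> d dvd n - i" using less.prems i dvd_add[of d i "n - i"] by auto
      then show ?thesis using less.IH i by simp
    next
      case False
      then show ?thesis using assms by (simp add: fps_in_X_power_def)
    qed
    then have "(\<Sum>i=1..n. B $ i * inverse B $ (n - i)) = 0"
      by (intro sum.neutral) blast
    then show ?case
      using \<open>0 < n\<close> by (simp add: fps_inverse_nth_rec)
  qed
qed

section \<open>Congruences between integral power series\<close>

definition int_fps :: "rat fps \<Rightarrow> bool" where
  "int_fps A \<longleftrightarrow> (\<forall>k. A $ k \<in> \<int>)"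

definition fps_cong :: "int \<Rightarrow> rat fps \<Rightarrow> rat fps \<Rightarrow> bool" where
  "fps_cong m A B \<longleftrightarrow> (\<exists>C. int_fps C \<and> A - B = fps_const (of_int m) * C)"

lemma int_fps_1 [simp]: "int_fps 1"
  and int_fps_X_power [simp]: "int_fps (fps_X ^ k)"
  and int_fps_of_nat [simp]: "int_fps (of_nat n)"
  by (simp_all add: int_fps_def flip: fps_of_nat)

lemma int_fps_add: "int_fps A \<Longrightarrow> int_fps B \<Longrightarrow> int_fps (A + B)"
  and int_fps_diff: "int_fps A \<Longrightarrow> int_fps B \<Longrightarrow> int_fps (A - B)"
  and int_fps_uminus: "int_fps A \<Longrightarrow> int_fps (- A)"
  by (simp_all add: int_fps_def)

lemma int_fps_mult: "int_fps A \<Longrightarrow> int_fps B \<Longrightarrow> int_fps (A * B)"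
  unfolding int_fps_def fps_mult_nth by (auto intro: Ints_mult)

lemma int_fps_power: "int_fps A \<Longrightarrow> int_fps (A ^ k)"
  by (induction k) (simp_all add: int_fps_mult)

lemma int_fps_sum: "(\<And>i. i \<in> S \<Longrightarrow> int_fps (f i)) \<Longrightarrow> int_fps (\<Sum>i\<in>S. f i)"
  unfolding int_fps_def fps_sum_nth by (auto intro: Ints_sum)

lemma int_fps_prod: "(\<And>i. i \<in> S \<Longrightarrow> int_fps (f i)) \<Longrightarrow> int_fps (\<Prod>i\<in>S. f i)"
  by (induction S rule: infinite_finite_induct) (simp_all add: int_fps_mult)

lemma int_fps_inverse:
  assumes "int_fps B" "B $ 0 = 1"
  shows "int_fps (inverse B)"
  unfolding int_fps_def
proof
  fix n show "inverse B $ n \<in> \<int>"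
  proof (induction n rule: less_induct)
    case (less n)
    show ?case
    proof (cases "n = 0")
      case False
      have "(\<Sum>i=1..n. B $ i * inverse B $ (n - i)) \<in> \<int>"
        using less assms(1) False by (intro Ints_sum Ints_mult) (auto simp: int_fps_def)
      then show ?thesis
        using False by (simp add: fps_inverse_nth_rec assms(2))
    qed (simp add: assms)
  qed
qed

lemma fps_cong_refl: "fps_cong m A A"
  unfolding fps_cong_def by (auto intro: exI[of _ 0] simp: int_fps_def)

lemma fps_cong_sym:
  assumes "fps_cong m A B"
  shows "fps_cong m B A"
proof -
  obtain C where "int_fps C" "A - B = fps_const (of_int m) * C"
    using assms unfolding fps_cong_def by blast
  then have "B - A = fps_const (of_int m) * (- C)"
    by (metis minus_diff_eq mult_minus_right)
  then show ?thesis
    unfolding fps_cong_def using \<open>int_fps C\<close> by (blast intro: int_fps_uminus)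
qed

lemma fps_cong_mult:
  assumes "fps_cong m A A'" "fps_cong m B B'" "int_fps A'" "int_fps B"
  shows "fps_cong m (A * B) (A' * B')"
proof -
  obtain C where C: "int_fps C" "A - A' = fps_const (of_int m) * C"
    using assms(1) unfolding fps_cong_def by blast
  obtain D where D: "int_fps D" "B - B' = fps_const (of_int m) * D"
    using assms(2) unfolding fps_cong_def by blast
  have "A * B - A' * B' = (A - A') * B + A' * (B - B')"
    by (simp add: algebra_simps)
  also have "\<dots> = fps_const (of_int m) * (C * B + A' * D)"
    unfolding C(2) D(2) by (simp only: distrib_left mult.assoc mult.left_commute)
  finally show ?thesis
    unfolding fps_cong_def using assms(3,4) C(1) D(1) by (blast intro: int_fps_add int_fps_mult)
qed

lemma fps_cong_power:
  assumes "fps_cong m A A'" "int_fps A" "int_fps A'"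
  shows "fps_cong m (A ^ k) (A' ^ k)"
proof (induction k)
  case (Suc k)
  then show ?case
    using fps_cong_mult[OF assms(1) Suc] assms(2,3) by (simp add: int_fps_power)
qed (simp add: fps_cong_refl)

lemma fps_cong_prod:
  assumes "\<And>i. i \<in> S \<Longrightarrow> fps_cong m (f i) (g i)"
    and "\<And>i. i \<in> S \<Longrightarrow> int_fps (f i)" "\<And>i. i \<in> S \<Longrightarrow> int_fps (g i)"
  shows "fps_cong m (\<Prod>i\<in>S. f i) (\<Prod>i\<in>S. g i)"
  using assms
proof (induction S rule: infinite_finite_induct)
  case (insert x F)
  then show ?case by (simp add: fps_cong_mult int_fps_prod)
qed (simp_all add: fps_cong_refl)

lemma fps_cong_inverse:
  assumes "fps_cong m B B'" "int_fps B" "int_fps B'" "B $ 0 = 1" "B' $ 0 = 1"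
  shows "fps_cong m (inverse B) (inverse B')"
proof -
  obtain D where D: "int_fps D" "B' - B = fps_const (of_int m) * D"
    using fps_cong_sym[OF assms(1)] unfolding fps_cong_def by blast
  have "inverse B - inverse B' = inverse B * (B' * inverse B') - (inverse B * B) * inverse B'"
    using assms(4,5) by (simp add: inverse_mult_eq_1 inverse_mult_eq_1')
  also have "\<dots> = inverse B * (B' - B) * inverse B'"
    by (simp only: right_diff_distrib left_diff_distrib mult.assoc)
  also have "\<dots> = fps_const (of_int m) * (inverse B * D * inverse B')"
    unfolding D(2) by (simp only: ac_simps)
  finally show ?thesis
    unfolding fps_cong_def
    using D(1) assms(2-5) by (intro exI[of _ "inverse B * D * inverse B'"] conjI int_fps_mult int_fps_inverse)
qed

lemma fps_cong_divide:
  assumes "fps_cong m A A'" "fps_cong m B B'"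
    and "int_fps A'" "int_fps B" "int_fps B'" "B $ 0 = 1" "B' $ 0 = 1"
  shows "fps_cong m (A / B) (A' / B')"
proof -
  have "fps_cong m (A * inverse B) (A' * inverse B')"
    using assms by (intro fps_cong_mult fps_cong_inverse int_fps_inverse)
  then show ?thesis
    using assms(6,7) by (simp add: fps_divide_unit)
qed

lemma fps_cong_nth:
  assumes "fps_cong m A B" "B $ k = 0"
  shows "\<exists>c::int. A $ k = of_int (m * c)"
proof -
  obtain C where "int_fps C" "A - B = fps_const (of_int m) * C"
    using assms(1) unfolding fps_cong_def by blast
  then have "A $ k = of_int m * C $ k" "C $ k \<in> \<int>"
    using assms(2) by (metis diff_zero fps_mult_left_const_nth fps_sub_nth, simp add: int_fps_def)
  then show ?thesis by (metis Ints_cases of_int_mult)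
qed

lemma fps_cong_add_power_prime:
  assumes "prime p" "int_fps A" "int_fps B"
  shows "fps_cong (int p) ((A + B) ^ p) (A ^ p + B ^ p)"
proof -
  define T where "T k = of_nat (p choose k) * A ^ k * B ^ (p - k)" for k
  define C where "C = (\<Sum>k\<in>{1..<p}. of_nat ((p choose k) div p) * A ^ k * B ^ (p - k))"
  have p: "0 < p" using assms(1) prime_gt_0_nat by blast
  have "{..p} = insert 0 (insert p {1..<p})" using p by auto
  then have "(A + B) ^ p = T 0 + T p + (\<Sum>k\<in>{1..<p}. T k)"
    using p by (simp add: binomial_ring T_def add.assoc)
  moreover have "(\<Sum>k\<in>{1..<p}. T k) = fps_const (of_int (int p)) * C"
    unfolding C_def sum_distrib_left
  proof (rule sum.cong)
    fix k assume "k \<in> {1..<p}"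
    then have "p dvd (p choose k)" using assms(1) by (intro dvd_choose_prime) auto
    then show "T k = fps_const (of_int (int p)) * (of_nat ((p choose k) div p) * A ^ k * B ^ (p - k))"
    proof -
      have "(of_nat (p choose k) :: rat fps) = of_nat p * of_nat ((p choose k) div p)"
        using \<open>p dvd (p choose k)\<close> by (simp flip: of_nat_mult)
      then show ?thesis unfolding T_def by (simp add: fps_of_nat mult.assoc)
    qed
  qed simp
  ultimately have "(A + B) ^ p - (A ^ p + B ^ p) = fps_const (of_int (int p)) * C"
    by (simp add: T_def)
  moreover have "int_fps C"
    unfolding C_def using assms(2,3)
    by (intro int_fps_sum int_fps_mult int_fps_power int_fps_of_nat)
  ultimately show ?thesis unfolding fps_cong_def by blast
qed

lemma fps_cong_one_minus_power_prime:
  assumes "prime p" "int_fps Y"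
  shows "fps_cong (int p) ((1 - Y) ^ p) (1 - Y ^ p)"
proof -
  have "fps_cong (int p) ((1 - Y + Y) ^ p) ((1 - Y) ^ p + Y ^ p)"
    using assms by (intro fps_cong_add_power_prime int_fps_diff int_fps_1)
  then have "fps_cong (int p) ((1 - Y) ^ p + Y ^ p) 1"
    by (simp add: fps_cong_sym)
  then show ?thesis
    unfolding fps_cong_def by (simp add: algebra_simps)
qed

lemma int_fps_eta_trunc: "int_fps (eta_trunc r N)"
  unfolding eta_trunc_def by (intro int_fps_prod int_fps_diff int_fps_1 int_fps_X_power)

lemma eta_trunc_nth_0: "0 < r \<Longrightarrow> eta_trunc r N $ 0 = 1"
  unfolding eta_trunc_def fps_prod_nth_0 by (intro prod.neutral) simp

lemma fps_in_X_power_eta_trunc: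
  assumes "d dvd r"
  shows "fps_in_X_power d (eta_trunc r N)"
  unfolding eta_trunc_def
proof (intro fps_in_X_power_prod)
  fix i
  have "d dvd r * i" using assms by simp
  then show "fps_in_X_power d (1 - fps_X ^ (r * i) :: rat fps)"
    by (auto simp: fps_in_X_power_def)
qed

lemma fps_cong_eta_trunc_power_prime:
  assumes "prime p"
  shows "fps_cong (int p) (eta_trunc r N ^ p) (eta_trunc (p * r) N)"
proof -
  have "fps_cong (int p) (\<Prod>i\<in>{1..N}. (1 - fps_X ^ (r * i)) ^ p) (\<Prod>i\<in>{1..N}. 1 - (fps_X ^ (r * i)) ^ p)"
    using assms
    by (intro fps_cong_prod fps_cong_one_minus_power_prime int_fps_power int_fps_diff int_fps_1 int_fps_X_power)
  then show ?thesis
    unfolding eta_trunc_def by (simp add: prod_power_distrib ac_simps flip: power_mult)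
qed

lemma b_col_cong_0_mod_prime:
  assumes "prime p" "0 < l" "0 < m" "\<not> p dvd n"
  shows "\<exists>c::int. b_col p l m n = of_int (int p * c)"
proof -
  define E where "E r = eta_trunc r n" for r
  have iE: "int_fps (E r)" for r
    unfolding E_def by (rule int_fps_eta_trunc)
  have E0: "E r $ 0 = 1" if "0 < r" for r
    unfolding E_def using that by (rule eta_trunc_nth_0)
  have frob: "fps_cong (int p) (E r ^ p) (E (p * r))" for r
    unfolding E_def using assms(1) by (rule fps_cong_eta_trunc_power_prime)
  have p: "0 < p" using assms(1) by (simp add: prime_gt_0_nat)
  define A' where "A' = E (p * l) * E (p * m)"
  define B' where "B' = E (p * 1) * E (p * (l * m))"
  have B'0: "B' $ 0 = 1" unfolding B'_def using p assms(2,3) by (simp add: E0)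
  have cong: "fps_cong (int p) ((E l ^ p * E m ^ p) / (E 1 ^ p * E (l * m) ^ p)) (A' / B')"
    unfolding A'_def B'_def using p assms(2,3) B'0[unfolded B'_def]
    by (intro fps_cong_divide fps_cong_mult frob int_fps_mult int_fps_power iE)
      (simp_all add: E0 fps_nth_power_0)
  have "fps_in_X_power p (A' / B')"
  proof -
    have "fps_in_X_power p A'" "fps_in_X_power p B'"
      unfolding A'_def B'_def E_def by (intro fps_in_X_power_mult fps_in_X_power_eta_trunc dvd_triv_left)+
    then show ?thesis
      using B'0 by (simp add: fps_divide_unit fps_in_X_power_mult fps_in_X_power_inverse)
  qed
  then have "(A' / B') $ n = 0"
    using assms(4) unfolding fps_in_X_power_def by blast
  then show ?thesis
    unfolding b_col_def E_def[symmetric] by (rule fps_cong_nth[OF cong])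
qed

lemma b_col_3_2_cong_0_mod_2:
  assumes "0 < m" "3 dvd m" "n mod 3 = 2"
  shows "\<exists>c::int. b_col 3 2 m n = of_int (2 * c)"
proof -
  define E where "E r = eta_trunc r n" for r
  have iE: "int_fps (E r)" for r
    unfolding E_def by (rule int_fps_eta_trunc)
  have E0: "E r $ 0 = 1" if "0 < r" for r
    unfolding E_def using that by (rule eta_trunc_nth_0)
  have frob: "fps_cong 2 (E (2 * r)) (E r ^ 2)" for r
    unfolding E_def using fps_cong_eta_trunc_power_prime[of 2 r n] by (simp add: fps_cong_sym)
  have cong: "fps_cong 2 ((E 2 ^ 3 * E m ^ 3) / (E 1 ^ 3 * E (2 * m) ^ 3))
      (((E 1 ^ 2) ^ 3 * E m ^ 3) / (E 1 ^ 3 * (E m ^ 2) ^ 3))"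
    using frob[of 1] frob[of m] assms(1)
    by (intro fps_cong_divide fps_cong_mult fps_cong_power fps_cong_refl int_fps_mult int_fps_power iE)
      (simp_all add: E0 fps_nth_power_0)
  have "E 1 ^ 3 * E m ^ 3 \<noteq> 0"
    using E0[of 1] E0[of m] assms(1) by (auto simp: fps_nth_power_0 dest: arg_cong[of _ _ "\<lambda>F. F $ 0"])
  then have quotient: "((E 1 ^ 2) ^ 3 * E m ^ 3) / (E 1 ^ 3 * (E m ^ 2) ^ 3) = E 1 ^ 3 / E m ^ 3"
    using fps_divide_cancel[of "E 1 ^ 3 * E m ^ 3" "E 1 ^ 3" "E m ^ 3"] by (simp add: algebra_simps flip: power_mult power_add)
  have "(E 1 ^ 3 * inverse (E m ^ 3)) $ n = 0"
  proof (rule fps_in_X_power_mult_nth_eq_0)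
    show "fps_in_X_power 3 (inverse (E m ^ 3))"
      unfolding E_def using assms(2)
      by (intro fps_in_X_power_inverse fps_in_X_power_power fps_in_X_power_eta_trunc)
    show "(E 1 ^ 3) $ i = 0" if "i \<le> n" "i mod 3 = n mod 3" for i
      using qpoch_cube_nth_eq_0[of i n] that assms(3)
      by (simp add: E_def eta_trunc_def qpoch_def)
  qed
  then have "(E 1 ^ 3 / E m ^ 3) $ n = 0"
    using E0[of m] assms(1) by (simp add: fps_divide_unit fps_nth_power_0)
  then show ?thesis
    unfolding b_col_def E_def[symmetric] by (rule fps_cong_nth[OF cong, unfolded quotient])
qed

theorem mainTheorem17:
  fixes t n :: nat
  assumes "odd t"
  shows "\<exists>c::int. b_col 3 2 (3 * t) (3 * n + 2) = of_int (6 * c)"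
proof -
  \<comment> \<open>Oddness of \<open>t\<close> is only needed in the form \<open>t > 0\<close>.\<close>
  have "0 < t" using assms by (rule odd_pos)
  have "\<not> 3 dvd 3 * n + 2" by presburger
  then obtain a :: int where a: "b_col 3 2 (3 * t) (3 * n + 2) = of_int (3 * a)"
    using b_col_cong_0_mod_prime[of 3 2 "3 * t" "3 * n + 2"] \<open>0 < t\<close> by auto
  have "(3 * n + 2) mod 3 = 2" by presburger
  then obtain b :: int where b: "b_col 3 2 (3 * t) (3 * n + 2) = of_int (2 * b)"
    using b_col_3_2_cong_0_mod_2[of "3 * t" "3 * n + 2"] \<open>0 < t\<close> by auto
  have "3 * a = 2 * b" using a b by simp
  then have "2 dvd a" by presburger
  then obtain c where "a = 2 * c" by (elim dvdE)
  then show ?thesis using a by auto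
qed

end
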